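(* Let $D$ be a Lagrangian diagram obtained by applying Ng's resolution to a front diagram of a Legendrian knot. Then the flooding algorithm applied to the area inequalities of $D$ succeeds, i.e. it assigns every crossing of $D$ to a tier.
   Context: Front diagram: projection $(x,y,z)\mapsto(x,z)$ of a Legendrian knot in $(\mathbb{R}^3,dz-y\,dx)$. Ng's resolution (Ng, "Computable Legendrian invariants") converts a front diagram into a Lagrangian diagram of a Legendrian isotopic knot, each front crossing becoming a crossing and each right cusp becoming a crossing bounding a small loop. For a Lagrangian diagram, an area patch is a bounded complementary region; traversing its boundary with the boundary orientation, a corner where one passes from an understrand to an overstrand has positive Reeb sign, otherwise negative. The area inequality of a patch says the Reeb-sign-weighted sum of the heights $h(q)$ of its corners is $>0$; the collection of these is $\mathcal{R}$, with $f_i:\sum_j\alpha_{i,j}h(q_j)>0$. Flooding algorithm: start with $\mathcal{R}'=\mathcal{R}$, $k=1$. (i) Let $T_k$ be the set of not-yet-assigned crossings $q_j$ with $\alpha_{i,j}\ge0$ for all $f_i\in\mathcal{R}'$. (ii) If $T_k=\emptyset$, the algorithm fails; otherwise remove from $\mathcal{R}'$ every $f_i$ having $\alpha_{i,j}>0$ for some $q_j\in T_k$. (iii) If $\mathcal{R}'\neq\emptyset$ increase $k$ and repeat; if $\mathcal{R}'=\emptyset$, put all remaining crossings in a final tier $T_{k+1}$ and the algorithm succeeds. *)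

theory Defs
  imports Main
begin

text \<open>A generic front diagram of a Legendrian knot, read from left to right (increasing x),
is a word of elementary events. Between consecutive events we have a vertical slab in which
the strands are numbered 0,1,... from bottom to top (increasing z). Slab k is the slab after
the first k events.
  LCusp i : a left cusp creating two new strands, at positions i and i+1 of the next slab;
  RCusp i : strands i and i+1 meet in a right cusp and disappear;
  Cross i : strands i and i+1 cross.\<close>

datatype front_event = LCusp nat | RCusp nat | Cross nat

fun cnt_step :: "front_event \<Rightarrow> nat \<Rightarrow> nat" where
  "cnt_step (LCusp i) n = n + 2"
| "cnt_step (RCusp i) n = n - 2"
| "cnt_step (Cross i) n = n"

definition strands :: "front_event list \<Rightarrow> nat \<Rightarrow> nat" where
  "strands w k = foldl (\<lambda>n e. cnt_step e n) 0 (take k w)"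

fun event_ok :: "front_event \<Rightarrow> nat \<Rightarrow> bool" where
  "event_ok (LCusp i) n = (i \<le> n)"
| "event_ok (RCusp i) n = (i + 1 < n)"
| "event_ok (Cross i) n = (i + 1 < n)"

definition front_word :: "front_event list \<Rightarrow> bool" where
  "front_word w \<longleftrightarrow> w \<noteq> [] \<and> (\<forall>e < length w. event_ok (w ! e) (strands w e))
                    \<and> strands w (length w) = 0"

text \<open>Connectivity of strands: strand j of slab e continues to strand j' of slab e+1.\<close>
fun strand_cont :: "front_event \<Rightarrow> nat \<Rightarrow> nat \<Rightarrow> bool" where
  "strand_cont (Cross i) j j' = (if j = i then j' = i + 1 else if j = i + 1 then j' = i else j' = j)"
| "strand_cont (LCusp i) j j' = (j' = (if j < i then j else j + 2))"
| "strand_cont (RCusp i) j j' = ((j < i \<and> j' = j) \<or> (i + 2 \<le> j \<and> j' = j - 2))"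

definition strand_nodes :: "front_event list \<Rightarrow> (nat \<times> nat) set" where
  "strand_nodes w = {(k, j). k \<le> length w \<and> j < strands w k}"

definition strand_adj :: "front_event list \<Rightarrow> nat \<times> nat \<Rightarrow> nat \<times> nat \<Rightarrow> bool" where
  "strand_adj w a b \<longleftrightarrow>
     (\<exists>e j j'. e < length w \<and> a = (e, j) \<and> b = (Suc e, j') \<and> j < strands w e
        \<and> j' < strands w (Suc e) \<and> strand_cont (w ! e) j j')
   \<or> (\<exists>e i. e < length w \<and> w ! e = LCusp i \<and> a = (Suc e, i) \<and> b = (Suc e, Suc i))
   \<or> (\<exists>e i. e < length w \<and> w ! e = RCusp i \<and> a = (e, i) \<and> b = (e, Suc i))"

definition is_knot :: "front_event list \<Rightarrow> bool" where
  "is_knot w \<longleftrightarrow> (\<forall>a \<in> strand_nodes w. \<forall>b \<in> strand_nodes w.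
                     (\<lambda>x y. strand_adj w x y \<or> strand_adj w y x)\<^sup>*\<^sup>* a b)"

text \<open>Gap g of slab k (0 \<le> g \<le> strands w k) is the part of the slab between strand g-1 and
strand g (gap 0 lies below all strands, the top gap above all strands).
Gap g of slab e continues into gap g' of slab e+1.\<close>
fun gap_cont :: "front_event \<Rightarrow> nat \<Rightarrow> nat \<Rightarrow> bool" where
  "gap_cont (Cross i) g g' = (g \<noteq> i + 1 \<and> g' = g)"
| "gap_cont (LCusp i) g g' =
     (if g < i then g' = g else if g = i then (g' = i \<or> g' = i + 2) else g' = g + 2)"
| "gap_cont (RCusp i) g g' =
     ((g < i \<and> g' = g) \<or> (g = i \<and> g' = i) \<or> (g = i + 2 \<and> g' = i) \<or> (i + 2 < g \<and> g' = g - 2))"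

definition gap_nodes :: "front_event list \<Rightarrow> (nat \<times> nat) set" where
  "gap_nodes w = {(k, g). k \<le> length w \<and> g \<le> strands w k}"

definition gap_adj :: "front_event list \<Rightarrow> nat \<times> nat \<Rightarrow> nat \<times> nat \<Rightarrow> bool" where
  "gap_adj w a b \<longleftrightarrow>
     (\<exists>e g g'. e < length w \<and> a = (e, g) \<and> b = (Suc e, g') \<and> g \<le> strands w e
        \<and> g' \<le> strands w (Suc e) \<and> gap_cont (w ! e) g g')"

definition gap_conn :: "front_event list \<Rightarrow> nat \<times> nat \<Rightarrow> nat \<times> nat \<Rightarrow> bool" where
  "gap_conn w = (\<lambda>x y. gap_adj w x y \<or> gap_adj w y x)\<^sup>*\<^sup>*"

definition region_of :: "front_event list \<Rightarrow> nat \<times> nat \<Rightarrow> (nat \<times> nat) set" where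
  "region_of w a = {b. gap_conn w a b}"

text \<open>Complementary regions of the resolved (Lagrangian) diagram: the regions of the front
(classes of connected gaps), plus one small loop region for every right cusp.\<close>
datatype patch = Region "(nat \<times> nat) set" | Loop nat

text \<open>Area patches = bounded complementary regions: every region except the unbounded one
(which contains gap 0 of slab 0), and all loops.\<close>
definition area_patches :: "front_event list \<Rightarrow> patch set" where
  "area_patches w =
     {Region (region_of w a) | a. a \<in> gap_nodes w \<and> \<not> gap_conn w a (0, 0)}
   \<union> {Loop e | e i. e < length w \<and> w ! e = RCusp i}"

text \<open>Crossings of Ng's resolution: front crossings and right cusps, indexed by event number.\<close>
definition resolved_crossings :: "front_event list \<Rightarrow> nat set" where
  "resolved_crossings w = {e. e < length w \<and> (\<exists>i. w ! e = Cross i \<or> w ! e = RCusp i)}"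

text \<open>The four quadrants (corners) at a crossing of the resolution, with their Reeb signs:
the left and right quadrants are positive, the top and bottom quadrants negative.\<close>
definition corners :: "front_event list \<Rightarrow> nat \<Rightarrow> (patch \<times> int) list" where
  "corners w e = (case w ! e of
      Cross i \<Rightarrow> [(Region (region_of w (e, i + 1)), 1), (Region (region_of w (Suc e, i + 1)), 1),
                 (Region (region_of w (e, i)), -1), (Region (region_of w (e, i + 2)), -1)]
    | RCusp i \<Rightarrow> [(Region (region_of w (e, i + 1)), 1), (Loop e, 1),
                 (Region (region_of w (e, i)), -1), (Region (region_of w (e, i + 2)), -1)]
    | LCusp i \<Rightarrow> [])"

text \<open>Coefficient alpha(f, q) of h(q) in the area inequality of the patch f:
the sum of the Reeb signs of the corners of f at q.\<close>
definition area_coeff :: "front_event list \<Rightarrow> patch \<Rightarrow> nat \<Rightarrow> int" where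
  "area_coeff w f q = sum_list (map snd (filter (\<lambda>c. fst c = f) (corners w q)))"

text \<open>flooding_succeeds alpha U R: the flooding algorithm, run with the set U of not yet
assigned crossings and the current set R of remaining inequalities, succeeds.\<close>
inductive flooding_succeeds :: "('p \<Rightarrow> 'c \<Rightarrow> int) \<Rightarrow> 'c set \<Rightarrow> 'p set \<Rightarrow> bool"
  for \<alpha> :: "'p \<Rightarrow> 'c \<Rightarrow> int" where
  finish: "\<lbrakk> T = {q \<in> U. \<forall>f \<in> R. 0 \<le> \<alpha> f q}; T \<noteq> {};
             {f \<in> R. \<not> (\<exists>q \<in> T. 0 < \<alpha> f q)} = {} \<rbrakk> \<Longrightarrow> flooding_succeeds \<alpha> U R"
| step: "\<lbrakk> T = {q \<in> U. \<forall>f \<in> R. 0 \<le> \<alpha> f q}; T \<noteq> {};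
           R' = {f \<in> R. \<not> (\<exists>q \<in> T. 0 < \<alpha> f q)}; R' \<noteq> {};
           flooding_succeeds \<alpha> (U - T) R' \<rbrakk> \<Longrightarrow> flooding_succeeds \<alpha> U R"

end

theory Submission
  imports Defs
begin

text \<open>Rank every area patch by the slab at which it ends on the right: a region of the front by
its rightmost slab, the loop of a right cusp by that cusp. A bounded region of the front is
closed on the right by a crossing or right cusp whose left quadrant it is, so it has a positive
corner there; the top and bottom quadrants of that crossing extend past it, so every patch with
a negative corner there ends strictly further right (and likewise for a loop at its cusp).
Hence at every round of the flooding the patch of largest rank still present has its witness
crossing in the current tier, and is removed.\<close>

lemma flooding_succeeds_by_rank:
  fixes \<alpha> :: "'p \<Rightarrow> 'c \<Rightarrow> int" and rank :: "'p \<Rightarrow> nat"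
  assumes "finite R" and "R \<noteq> {}"
    and "\<And>f. f \<in> R \<Longrightarrow> \<exists>q\<in>U. 0 < \<alpha> f q \<and> (\<forall>g\<in>R. \<alpha> g q < 0 \<longrightarrow> rank f < rank g)"
  shows "flooding_succeeds \<alpha> U R"
  using assms
proof (induction "card R" arbitrary: U R rule: less_induct)
  case less
  have "Max (rank ` R) \<in> rank ` R"
    using less.prems(1,2) by (intro Max_in) auto
  then obtain f where f: "f \<in> R" and f_Max: "rank f = Max (rank ` R)"
    by (metis imageE)
  have f_max: "rank g \<le> rank f" if "g \<in> R" for g
    using that less.prems(1) f_Max by simp
  obtain q where q: "q \<in> U" "0 < \<alpha> f q" and q_neg: "\<forall>g\<in>R. \<alpha> g q < 0 \<longrightarrow> rank f < rank g"
    using less.prems(3)[OF f] by blast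
  define T where "T = {q \<in> U. \<forall>f \<in> R. 0 \<le> \<alpha> f q}"
  define R' where "R' = {f \<in> R. \<not> (\<exists>q \<in> T. 0 < \<alpha> f q)}"
  have "q \<in> T"
    unfolding T_def using q q_neg f_max by (auto simp flip: not_less)
  then have "T \<noteq> {}"
    by blast
  have "f \<notin> R'"
    unfolding R'_def using \<open>q \<in> T\<close> q by auto
  then have R'_psubset: "R' \<subset> R"
    using f unfolding R'_def by auto
  show ?case
  proof (cases "R' = {}")
    case True
    then show ?thesis
      unfolding R'_def by (rule flooding_succeeds.finish[OF T_def \<open>T \<noteq> {}\<close>])
  next
    case False
    have "flooding_succeeds \<alpha> (U - T) R'"
    proof (rule less.hyps)
      show "card R' < card R"
        using R'_psubset less.prems(1) by (rule psubset_card_mono[rotated])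
      show "finite R'"
        using R'_psubset less.prems(1) finite_subset by blast
      show "R' \<noteq> {}"
        by (fact False)
      fix f' assume f': "f' \<in> R'"
      then obtain q' where q': "q' \<in> U" "0 < \<alpha> f' q'" "\<forall>g\<in>R. \<alpha> g q' < 0 \<longrightarrow> rank f' < rank g"
        using less.prems(3) unfolding R'_def by blast
      have "q' \<notin> T"
        using f' q'(2) unfolding R'_def by auto
      then show "\<exists>q\<in>U - T. 0 < \<alpha> f' q \<and> (\<forall>g\<in>R'. \<alpha> g q < 0 \<longrightarrow> rank f' < rank g)"
        using q' R'_psubset by blast
    qed
    then show ?thesis
      by (rule flooding_succeeds.step[OF T_def \<open>T \<noteq> {}\<close> R'_def False])
  qed
qed

lemma strands_Suc: "k < length w \<Longrightarrow> strands w (Suc k) = cnt_step (w ! k) (strands w k)"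
  by (simp add: strands_def take_Suc_conv_app_nth)

lemma front_word_event_ok: "front_word w \<Longrightarrow> e < length w \<Longrightarrow> event_ok (w ! e) (strands w e)"
  by (simp add: front_word_def)

lemma front_word_has_RCusp:
  assumes "front_word w"
  obtains e i where "e < length w" and "w ! e = RCusp i"
proof -
  have "\<exists>e < length w. \<exists>i. w ! e = RCusp i"
  proof (rule ccontr)
    assume no_RCusp: "\<not> ?thesis"
    have w_ne: "0 < length w"
      using assms by (simp add: front_word_def)
    have "\<exists>i. w ! 0 = LCusp i"
      using front_word_event_ok[OF assms w_ne] by (cases "w ! 0") (auto simp: strands_def)
    then have "strands w 1 = 2"
      using strands_Suc[OF w_ne] by (auto simp: strands_def)
    moreover have "strands w k \<le> strands w (Suc k)" for k
    proof (cases "k < length w")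
      case True
      then show ?thesis
        using strands_Suc[OF True] no_RCusp by (cases "w ! k") auto
    next
      case False
      then show ?thesis
        by (simp add: strands_def)
    qed
    then have "strands w 1 \<le> strands w (length w)"
      by (rule lift_Suc_mono_le) (use w_ne in linarith)
    ultimately show False
      using assms by (simp add: front_word_def)
  qed
  then show thesis
    using that by blast
qed

lemma gap_conn_symclp: "gap_conn w = (symclp (gap_adj w))\<^sup>*\<^sup>*"
  unfolding gap_conn_def symclp_def[abs_def] ..

lemma equivp_gap_conn: "equivp (gap_conn w)"
  unfolding gap_conn_symclp by (rule equivp_rtranclp) simp

lemma mem_region_of_iff: "b \<in> region_of w a \<longleftrightarrow> gap_conn w a b"
  by (simp add: region_of_def)

lemmas gap_conn_sym = equivp_symp[OF equivp_gap_conn]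
  and gap_conn_trans = equivp_transp[OF equivp_gap_conn]

lemma region_of_eq: "gap_conn w a b \<Longrightarrow> region_of w a = region_of w b"
  unfolding region_of_def using gap_conn_sym gap_conn_trans by blast

lemma self_mem_region_of: "a \<in> region_of w a"
  using equivp_gap_conn by (simp add: mem_region_of_iff equivp_reflp)

lemma gap_adj_mem_region_of: "gap_adj w a b \<Longrightarrow> b \<in> region_of w a"
  by (simp add: mem_region_of_iff gap_conn_def r_into_rtranclp)

lemma gap_conn_bottom_gap: "k \<le> length w \<Longrightarrow> gap_conn w (k, 0) (0, 0)"
proof (induction k)
  case 0
  then show ?case by (simp add: gap_conn_def)
next
  case (Suc k)
  have "gap_cont (w ! k) 0 0"
    by (cases "w ! k") auto
  then have "gap_adj w (k, 0) (Suc k, 0)"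
    using Suc.prems by (auto simp: gap_adj_def)
  then have "gap_conn w (k, 0) (Suc k, 0)"
    by (simp add: gap_conn_def r_into_rtranclp)
  with Suc show ?case
    by (meson Suc_leD gap_conn_sym gap_conn_trans)
qed

lemma region_of_subset_gap_nodes:
  assumes "a \<in> gap_nodes w"
  shows "region_of w a \<subseteq> gap_nodes w"
proof
  fix b
  assume "b \<in> region_of w a"
  then have "gap_conn w a b"
    by (simp add: mem_region_of_iff)
  then show "b \<in> gap_nodes w"
    unfolding gap_conn_def
    by (induction rule: rtranclp_induct) (use assms in \<open>auto simp: gap_adj_def gap_nodes_def\<close>)
qed

lemma finite_gap_nodes: "finite (gap_nodes w)"
proof (rule finite_subset)
  show "gap_nodes w \<subseteq> Sigma {..length w} (\<lambda>k. {..strands w k})"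
    unfolding gap_nodes_def by auto
qed auto

lemma finite_region_of: "a \<in> gap_nodes w \<Longrightarrow> finite (region_of w a)"
  using region_of_subset_gap_nodes finite_gap_nodes finite_subset by blast

lemma finite_area_patches: "finite (area_patches w)"
proof (rule finite_subset)
  show "area_patches w \<subseteq> (\<lambda>a. Region (region_of w a)) ` gap_nodes w \<union> Loop ` {..<length w}"
    unfolding area_patches_def by auto
qed (simp add: finite_gap_nodes)

lemma gap_cont_exists:
  assumes "event_ok ev n" and "g \<le> n"
    and not_middle: "\<And>i. ev = Cross i \<or> ev = RCusp i \<Longrightarrow> g \<noteq> Suc i"
  shows "\<exists>g' \<le> cnt_step ev n. gap_cont ev g g'"
proof (cases ev)
  case (LCusp i)
  then show ?thesis
    using assms(2) by (intro exI[of _ "if g \<le> i then g else g + 2"]) auto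
next
  case (RCusp i)
  then consider "g < i" | "g = i" | "g = i + 2" | "i + 2 < g"
    using not_middle by fastforce
  then show ?thesis
    using RCusp assms(1,2)
    by cases (auto intro: exI[of _ g] exI[of _ i] exI[of _ "g - 2"])
next
  case (Cross i)
  then show ?thesis
    using assms(2) not_middle by (intro exI[of _ g]) auto
qed

lemma
  assumes "front_word w" and "e < length w" and "w ! e = Cross i \<or> w ! e = RCusp i"
  shows lower_gap_continues: "(Suc e, i) \<in> region_of w (e, i)"
    and upper_gap_continues: "\<exists>g. (Suc e, g) \<in> region_of w (e, i + 2)"
proof -
  note ok = front_word_event_ok[OF assms(1,2)] and strands = strands_Suc[OF assms(2)]
  show "(Suc e, i) \<in> region_of w (e, i)"
    using assms ok strands by (intro gap_adj_mem_region_of) (auto simp: gap_adj_def)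
  have "gap_adj w (e, i + 2) (Suc e, if w ! e = Cross i then i + 2 else i)"
    using assms ok strands by (auto simp: gap_adj_def)
  then show "\<exists>g. (Suc e, g) \<in> region_of w (e, i + 2)"
    using gap_adj_mem_region_of by blast
qed

fun right_end :: "patch \<Rightarrow> nat" where
  "right_end (Region S) = Max (fst ` S)"
| "right_end (Loop e) = e"

lemma le_right_end_Region:
  assumes "a \<in> gap_nodes w" and "(k, g) \<in> region_of w a"
  shows "k \<le> right_end (Region (region_of w a))"
proof -
  have "k \<in> fst ` region_of w a"
    using assms(2) by force
  then show ?thesis
    using finite_region_of[OF assms(1)] by simp
qed

lemma area_coeff_neg_corners:
  assumes "w ! e = Cross i \<or> w ! e = RCusp i" and "area_coeff w g e < 0"
  shows "g = Region (region_of w (e, i)) \<or> g = Region (region_of w (e, i + 2))"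
  using assms by (auto simp: area_coeff_def corners_def split: if_splits)

lemma right_end_gt_if_area_coeff_neg:
  assumes "front_word w" and "e < length w" and ev: "w ! e = Cross i \<or> w ! e = RCusp i"
    and "area_coeff w g e < 0"
  shows "e < right_end g"
proof -
  have ok: "event_ok (w ! e) (strands w e)"
    using front_word_event_ok[OF assms(1,2)] .
  then have nodes: "(e, i) \<in> gap_nodes w" "(e, i + 2) \<in> gap_nodes w"
    using assms(2) ev by (auto simp: gap_nodes_def)
  obtain g' where "(Suc e, g') \<in> region_of w (e, i + 2)"
    using upper_gap_continues[OF assms(1-3)] by blast
  then have "Suc e \<le> right_end (Region (region_of w (e, i + 2)))"
    by (rule le_right_end_Region[OF nodes(2)])
  moreover have "Suc e \<le> right_end (Region (region_of w (e, i)))"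
    using le_right_end_Region[OF nodes(1) lower_gap_continues[OF assms(1-3)]] .
  ultimately show ?thesis
    using area_coeff_neg_corners[OF ev assms(4)] by auto
qed

lemma bounded_region_closes:
  assumes "front_word w" and "a \<in> gap_nodes w" and unbounded: "\<not> gap_conn w a (0, 0)"
  defines "K \<equiv> right_end (Region (region_of w a))"
  obtains i where "K < length w" and "w ! K = Cross i \<or> w ! K = RCusp i"
    and "region_of w a = region_of w (K, Suc i)"
proof -
  have "K \<in> fst ` region_of w a"
    unfolding K_def right_end.simps using finite_region_of[OF assms(2)] self_mem_region_of[of a w]
    by (intro Max_in) auto
  then obtain g where "(K, g) \<in> region_of w a"
    by force
  then have conn: "gap_conn w a (K, g)" and "(K, g) \<in> gap_nodes w"
    using region_of_subset_gap_nodes[OF assms(2)] by (auto simp: mem_region_of_iff)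
  then have "K \<le> length w" and g_le: "g \<le> strands w K"
    by (auto simp: gap_nodes_def)
  have "K \<noteq> length w"
  proof
    assume "K = length w"
    then have "g = 0"
      using g_le assms(1) by (simp add: front_word_def)
    then show False
      using gap_conn_bottom_gap[OF \<open>K \<le> length w\<close>] conn unbounded gap_conn_trans by blast
  qed
  then have K_lt: "K < length w"
    using \<open>K \<le> length w\<close> by simp
  have "\<exists>i. (w ! K = Cross i \<or> w ! K = RCusp i) \<and> g = Suc i"
  proof (rule ccontr)
    assume "\<not> ?thesis"
    then obtain g' where "g' \<le> strands w (Suc K)" and "gap_cont (w ! K) g g'"
      using gap_cont_exists[OF front_word_event_ok[OF assms(1) K_lt] g_le] strands_Suc[OF K_lt]
      by auto
    then have "gap_adj w (K, g) (Suc K, g')"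
      using K_lt g_le by (auto simp: gap_adj_def)
    then have "(Suc K, g') \<in> region_of w a"
      using region_of_eq[OF conn] gap_adj_mem_region_of by blast
    then show False
      using le_right_end_Region[OF assms(2)] unfolding K_def by fastforce
  qed
  then show thesis
    using that K_lt region_of_eq[OF conn] by blast
qed

lemma area_coeff_closing_crossing:
  assumes "front_word w" and "e < length w" and ev: "w ! e = Cross i \<or> w ! e = RCusp i"
    and closed: "\<And>g. (Suc e, g) \<notin> region_of w (e, Suc i)"
  shows "area_coeff w (Region (region_of w (e, Suc i))) e = 1"
proof -
  obtain g where "(Suc e, g) \<in> region_of w (e, i + 2)"
    using upper_gap_continues[OF assms(1-3)] by blast
  then have top: "region_of w (e, Suc (Suc i)) \<noteq> region_of w (e, Suc i)"
    using closed by (metis add_2_eq_Suc')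
  have bottom: "region_of w (e, i) \<noteq> region_of w (e, Suc i)"
    using closed lower_gap_continues[OF assms(1-3)] by metis
  have right: "region_of w (Suc e, Suc i) \<noteq> region_of w (e, Suc i)"
    using closed self_mem_region_of by metis
  from ev show ?thesis
    by (elim disjE) (simp_all add: area_coeff_def corners_def top bottom right)
qed

lemma area_patch_has_rank_witness:
  assumes "front_word w" and "f \<in> area_patches w"
  shows "\<exists>q\<in>resolved_crossings w. 0 < area_coeff w f q \<and>
           (\<forall>g. area_coeff w g q < 0 \<longrightarrow> right_end f < right_end g)"
  using assms(2) unfolding area_patches_def
proof (elim UnE CollectE exE conjE)
  fix a
  assume f: "f = Region (region_of w a)" and a: "a \<in> gap_nodes w" "\<not> gap_conn w a (0, 0)"
  define K where "K = right_end f"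
  obtain i where K: "K < length w" and ev: "w ! K = Cross i \<or> w ! K = RCusp i"
    and region: "region_of w a = region_of w (K, Suc i)"
    using bounded_region_closes[OF assms(1) a] unfolding K_def f by blast
  have "(Suc K, g) \<notin> region_of w (K, Suc i)" for g
    using le_right_end_Region[OF a(1)] region unfolding K_def f by fastforce
  then have "area_coeff w f K = 1"
    using area_coeff_closing_crossing[OF assms(1) K ev] f region by simp
  moreover have "K \<in> resolved_crossings w"
    using K ev by (auto simp: resolved_crossings_def)
  moreover have "\<forall>g. area_coeff w g K < 0 \<longrightarrow> right_end f < right_end g"
    using right_end_gt_if_area_coeff_neg[OF assms(1) K ev] by (simp add: K_def)
  ultimately show ?thesis
    by force
next
  fix e i
  assume f: "f = Loop e" and e: "e < length w" and ev: "w ! e = RCusp i"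
  have "area_coeff w f e = 1"
    using f ev by (simp add: area_coeff_def corners_def)
  moreover have "e \<in> resolved_crossings w"
    using e ev by (auto simp: resolved_crossings_def)
  moreover have "\<forall>g. area_coeff w g e < 0 \<longrightarrow> right_end f < right_end g"
    using right_end_gt_if_area_coeff_neg[OF assms(1) e] ev f by simp
  ultimately show ?thesis
    by force
qed

theorem mainTheorem7:
  fixes w :: "front_event list"
  assumes "front_word w" and "is_knot w"
  shows "flooding_succeeds (area_coeff w) (resolved_crossings w) (area_patches w)"
proof (rule flooding_succeeds_by_rank[where rank = right_end])
  show "finite (area_patches w)"
    by (rule finite_area_patches)
  obtain e i where "e < length w" and "w ! e = RCusp i"
    using front_word_has_RCusp[OF assms(1)] .
  then show "area_patches w \<noteq> {}"
    unfolding area_patches_def by blast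
  show "\<exists>q\<in>resolved_crossings w. 0 < area_coeff w f q \<and>
      (\<forall>g\<in>area_patches w. area_coeff w g q < 0 \<longrightarrow> right_end f < right_end g)"
    if "f \<in> area_patches w" for f
    using area_patch_has_rank_witness[OF assms(1) that] by blast
qed

end
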